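(* There is an absolute constant $c>0$ such that: given a 2D SLP $\mathcal G$ deriving a 2D string $T\in\Sigma^{N\times M}$ with $N\le M$, one can construct a 1D SLP of size at most $c\cdot|\mathcal G|\cdot N$ deriving the string $T[1]\cdot T[2]\cdots T[N]$ of length $NM$ (the concatenation of all rows of $T$, from top to bottom).
   Context: Let $\Sigma$ be a fixed finite alphabet. A 2D string of size $n\times m$ is an $n\times m$ array of characters of $\Sigma$; $\mathrm{h}(S)=n$ is its height and $\mathrm{w}(S)=m$ its width; $S[i]$ denotes its $i$-th row (a string of length $m$). For 2D strings $A,B$ with $\mathrm{h}(A)=\mathrm{h}(B)$, $A \oplus_{\mathrm h} B$ denotes their horizontal concatenation ($B$ placed to the right of $A$); for $\mathrm{w}(A)=\mathrm{w}(B)$, $A\oplus_{\mathrm v} B$ denotes their vertical concatenation ($B$ placed below $A$). A 2D SLP is a triple $\mathcal{G}=(\mathcal{V},\mathcal{S},\rho)$ where $\mathcal{V}$ is a finite set of nonterminals (disjoint from $\Sigma$), each $X\in\mathcal V$ having a dimension $(\mathrm h(X),\mathrm w(X))$, $\mathcal S\in\mathcal V$ is the starting nonterminal, and $\rho$ assigns to each $X$ a right-hand side which is either a character $\sigma\in\Sigma$ (then $\mathrm h(X)=\mathrm w(X)=1$), or $Y\oplus_{\mathrm h} Z$ with $Y,Z\in\mathcal V$, $\mathrm h(X)=\mathrm h(Y)=\mathrm h(Z)$, $\mathrm w(X)=\mathrm w(Y)+\mathrm w(Z)$, or $Y\oplus_{\mathrm v}Z$ with $Y,Z\in\mathcal V$,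 $\mathrm w(X)=\mathrm w(Y)=\mathrm w(Z)$, $\mathrm h(X)=\mathrm h(Y)+\mathrm h(Z)$; the relation "$Y$ occurs in the right-hand side of $X$" must be acyclic. The expansion $\exp(X)$ is defined recursively, and $\exp(\mathcal G)=\exp(\mathcal S)$ is the derived string. The size $|\mathcal G|$ is the total number of symbols (nonterminals and characters) on all right-hand sides. A 1D SLP is a 2D SLP using only character and horizontal-concatenation productions; it derives a $1\times n$ string, identified with an ordinary string of length $n$. *)

theory Defs
  imports Complex_Main
begin

datatype ('n, 'a) rhs = Chr 'a | HCat 'n 'n | VCat 'n 'n

record ('n, 'a) slp2 =
  nts   :: "'n set"
  start :: 'n
  rules :: "'n \<Rightarrow> ('n, 'a) rhs"

fun rhs_nts :: "('n, 'a) rhs \<Rightarrow> 'n set" where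
  "rhs_nts (Chr c) = {}"
| "rhs_nts (HCat Y Z) = {Y, Z}"
| "rhs_nts (VCat Y Z) = {Y, Z}"

fun rhs_size :: "('n, 'a) rhs \<Rightarrow> nat" where
  "rhs_size (Chr c) = 1"
| "rhs_size (HCat Y Z) = 2"
| "rhs_size (VCat Y Z) = 2"

definition slp_size :: "('n, 'a, 'z) slp2_scheme \<Rightarrow> nat" where
  "slp_size G = (\<Sum>X\<in>nts G. rhs_size (rules G X))"

fun dims_ok :: "('n \<Rightarrow> nat) \<Rightarrow> ('n \<Rightarrow> nat) \<Rightarrow> 'n \<Rightarrow> ('n, 'a) rhs \<Rightarrow> bool" where
  "dims_ok h w X (Chr c) = (h X = 1 \<and> w X = 1)"
| "dims_ok h w X (HCat Y Z) = (h X = h Y \<and> h X = h Z \<and> w X = w Y + w Z)"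
| "dims_ok h w X (VCat Y Z) = (w X = w Y \<and> w X = w Z \<and> h X = h Y + h Z)"

definition is_slp2 :: "('n, 'a, 'z) slp2_scheme \<Rightarrow> bool" where
  "is_slp2 G \<longleftrightarrow> finite (nts G) \<and> start G \<in> nts G
     \<and> (\<forall>X\<in>nts G. rhs_nts (rules G X) \<subseteq> nts G)
     \<and> (\<exists>h w. \<forall>X\<in>nts G. dims_ok h w X (rules G X))
     \<and> acyclic {(X, Y). X \<in> nts G \<and> Y \<in> rhs_nts (rules G X)}"

definition is_slp1 :: "('n, 'a, 'z) slp2_scheme \<Rightarrow> bool" where
  "is_slp1 G \<longleftrightarrow> is_slp2 G \<and> (\<forall>X\<in>nts G. \<forall>Y Z. rules G X \<noteq> VCat Y Z)"

text \<open>2D strings are lists of rows. expands G X T means exp(X) = T.\<close>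
inductive expands :: "('n, 'a, 'z) slp2_scheme \<Rightarrow> 'n \<Rightarrow> 'a list list \<Rightarrow> bool"
  for G where
  chr:  "X \<in> nts G \<Longrightarrow> rules G X = Chr c \<Longrightarrow> expands G X [[c]]"
| hcat: "X \<in> nts G \<Longrightarrow> rules G X = HCat Y Z \<Longrightarrow> expands G Y A \<Longrightarrow> expands G Z B
          \<Longrightarrow> length A = length B \<Longrightarrow> expands G X (map (\<lambda>(r, s). r @ s) (zip A B))"
| vcat: "X \<in> nts G \<Longrightarrow> rules G X = VCat Y Z \<Longrightarrow> expands G Y A \<Longrightarrow> expands G Z B
          \<Longrightarrow> expands G X (A @ B)"

definition derives :: "('n, 'a, 'z) slp2_scheme \<Rightarrow> 'a list list \<Rightarrow> bool" where
  "derives G T \<longleftrightarrow> expands G (start G) T"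

end

theory Submission
  imports Defs "HOL-Library.Countable"
begin

text \<open>A row of the expansion of a nonterminal is either a row of one of its children (vertical
  rule) or the concatenation of the same row of both children (horizontal rule). Hence the set of
  the first N rows of all nonterminals, at most |G| N strings, is closed under splitting a string
  of length at least 2 into two members. Adding the N prefixes T[1] \<dots> T[k], each of which splits
  into the previous prefix and a row, keeps the set split-closed, and a finite split-closed set of
  nonempty strings is the set of expansions of a 1D SLP with one production of size at most 2 per
  member.\<close>

definition occurrence_rel :: "('n, 'a, 'z) slp2_scheme \<Rightarrow> ('n \<times> 'n) set" where
  "occurrence_rel G = {(X, Y). X \<in> nts G \<and> Y \<in> rhs_nts (rules G X)}"

lemma wf_occurrence_rel_converse:
  assumes "is_slp2 G"
  shows "wf ((occurrence_rel G)\<inverse>)"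
proof (rule finite_acyclic_wf_converse)
  have "occurrence_rel G \<subseteq> nts G \<times> nts G"
    using assms unfolding occurrence_rel_def is_slp2_def by auto
  then show "finite (occurrence_rel G)"
    using assms unfolding is_slp2_def by (meson finite_SigmaI finite_subset)
  show "acyclic (occurrence_rel G)"
    using assms unfolding is_slp2_def occurrence_rel_def by simp
qed

lemma expands_dims:
  assumes "\<forall>X\<in>nts G. dims_ok h w X (rules G X)" and "expands G X A"
  shows "length A = h X \<and> (\<forall>r\<in>set A. length r = w X)"
  using assms(2)
proof induction
  case (chr X c)
  have "h X = 1 \<and> w X = 1" using assms(1) chr by (metis dims_ok.simps(1))
  then show ?case by simp
next
  case (hcat X Y Z A B)
  have "h X = h Y \<and> h X = h Z \<and> w X = w Y + w Z"
    using assms(1) hcat.hyps(1,2) by (metis dims_ok.simps(2))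
  then show ?case using hcat.IH hcat.hyps(5) by (fastforce dest: set_zip_leftD set_zip_rightD)
next
  case (vcat X Y Z A B)
  have "w X = w Y \<and> w X = w Z \<and> h X = h Y + h Z"
    using assms(1) vcat.hyps(1,2) by (metis dims_ok.simps(3))
  then show ?case using vcat.IH by auto
qed

lemma expands_nonempty:
  assumes "expands G X A"
  shows "A \<noteq> [] \<and> [] \<notin> set A"
  using assms
  by induction (auto dest: set_zip_leftD simp: zip_eq_Nil_iff)

lemma expands_unique:
  assumes "expands G X A" and "expands G X B"
  shows "A = B"
  using assms
proof (induction arbitrary: B)
  case (chr X c)
  from chr.prems show ?case by cases (simp_all add: chr.hyps)
next
  case (hcat X Y Z A B)
  from hcat.prems show ?case by cases (simp_all add: hcat.hyps hcat.IH)
next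
  case (vcat X Y Z A B)
  from vcat.prems show ?case by cases (simp_all add: vcat.hyps vcat.IH)
qed

lemma expands_exists:
  assumes "is_slp2 G" and "X \<in> nts G"
  shows "\<exists>A. expands G X A"
proof -
  obtain h w where hw: "\<forall>X\<in>nts G. dims_ok h w X (rules G X)"
    using assms(1) unfolding is_slp2_def by blast
  show ?thesis
    using wf_occurrence_rel_converse[OF assms(1)] assms(2)
  proof (induction X rule: wf_induct_rule)
    case (less X)
    have IH: "\<exists>A. expands G Y A" if "Y \<in> rhs_nts (rules G X)" for Y
      using less that assms(1) unfolding is_slp2_def occurrence_rel_def by blast
    show ?case
    proof (cases "rules G X")
      case (Chr c)
      then show ?thesis using expands.chr[OF less.prems] by blast
    next
      case (HCat Y Z)
      then obtain A B where A: "expands G Y A" and B: "expands G Z B" using IH by force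
      have "length A = length B"
        using expands_dims[OF hw A] expands_dims[OF hw B] hw less.prems HCat by force
      then show ?thesis using expands.hcat[OF less.prems HCat A B] by blast
    next
      case (VCat Y Z)
      then obtain A B where A: "expands G Y A" and B: "expands G Z B" using IH by force
      then show ?thesis using expands.vcat[OF less.prems VCat A B] by blast
    qed
  qed
qed

definition expansion :: "('n, 'a, 'z) slp2_scheme \<Rightarrow> 'n \<Rightarrow> 'a list list" where
  "expansion G X = (THE A. expands G X A)"

lemma expansion_eqI:
  assumes "expands G X A"
  shows "expansion G X = A"
  unfolding expansion_def
  by (rule the_equality[where P = "expands G X", OF assms]) (rule expands_unique[OF _ assms])

lemma expands_expansion:
  assumes "is_slp2 G" and "X \<in> nts G"
  shows "expands G X (expansion G X)"
  using expands_exists[OF assms] expansion_eqI by metis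

definition split_closed :: "'a list set \<Rightarrow> bool" where
  "split_closed S \<longleftrightarrow> (\<forall>s\<in>S. 2 \<le> length s \<longrightarrow> (\<exists>a\<in>S. \<exists>b\<in>S. s = a @ b))"

definition split_rhs :: "'a::countable list set \<Rightarrow> 'a list \<Rightarrow> (nat, 'a) rhs" where
  "split_rhs S s =
     (if length s = 1 then Chr (hd s)
      else case SOME (a, b). a \<in> S \<and> b \<in> S \<and> s = a @ b of (a, b) \<Rightarrow> HCat (to_nat a) (to_nat b))"

definition split_slp :: "'a::countable list set \<Rightarrow> 'a list \<Rightarrow> (nat, 'a) slp2" where
  "split_slp S t = \<lparr>nts = to_nat ` S, start = to_nat t, rules = \<lambda>X. split_rhs S (from_nat X)\<rparr>"

lemma split_rhsE:
  assumes "split_closed S" and "[] \<notin> S" and "s \<in> S"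
  obtains c where "s = [c]" and "split_rhs S s = Chr c"
  | a b where "a \<in> S" and "b \<in> S" and "a \<noteq> []" and "b \<noteq> []" and "s = a @ b"
    and "split_rhs S s = HCat (to_nat a) (to_nat b)"
proof (cases "length s = 1")
  case True
  then obtain c where "s = [c]" by (auto simp: length_Suc_conv)
  then show ?thesis using that(1) by (simp add: split_rhs_def)
next
  case False
  moreover have "s \<noteq> []" using assms(2,3) by blast
  ultimately have "2 \<le> length s" by (cases s) (auto simp: Suc_le_eq)
  with assms(1,3) obtain a b where "a \<in> S" "b \<in> S" "s = a @ b"
    unfolding split_closed_def by blast
  then have "\<exists>p. case p of (a, b) \<Rightarrow> a \<in> S \<and> b \<in> S \<and> s = a @ b" by auto
  from someI_ex[OF this] obtain a b where
    "(SOME (a, b). a \<in> S \<and> b \<in> S \<and> s = a @ b) = (a, b)" "a \<in> S" "b \<in> S" "s = a @ b"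
    by (auto split: prod.splits)
  moreover have "a \<noteq> []" "b \<noteq> []" using \<open>[] \<notin> S\<close> \<open>a \<in> S\<close> \<open>b \<in> S\<close> by auto
  ultimately show ?thesis using that(2) False by (simp add: split_rhs_def)
qed

context
  fixes S :: "'a::countable list set" and t :: "'a list"
  assumes closed: "split_closed S" and no_Nil: "[] \<notin> S"
begin

lemma is_slp1_split_slp:
  assumes "finite S" and "t \<in> S"
  shows "is_slp1 (split_slp S t)"
proof -
  let ?G = "split_slp S t" and ?len = "\<lambda>X. length (from_nat X :: 'a list)"
  have rhs: "rhs_nts (rules ?G X) \<subseteq> nts ?G \<and> dims_ok (\<lambda>_. 1) ?len X (rules ?G X)
      \<and> (\<forall>Y\<in>rhs_nts (rules ?G X). ?len Y < ?len X) \<and> (\<forall>Y Z. rules ?G X \<noteq> VCat Y Z)"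
    if X: "X \<in> nts ?G" for X
  proof -
    obtain s where s: "s \<in> S" "X = to_nat s" using X by (auto simp: split_slp_def)
    show ?thesis
      by (rule split_rhsE[OF closed no_Nil s(1)]) (auto simp: split_slp_def s(2))
  qed
  have "occurrence_rel ?G \<subseteq> (measure ?len)\<inverse>"
    using rhs unfolding occurrence_rel_def by auto
  then have "acyclic (occurrence_rel ?G)"
    by (meson acyclic_converse acyclic_subset wf_acyclic wf_measure)
  then show ?thesis
    unfolding is_slp1_def is_slp2_def occurrence_rel_def
  proof (intro conjI)
    show "finite (nts ?G)" "start ?G \<in> nts ?G"
      using assms by (simp_all add: split_slp_def)
    show "\<exists>h w. \<forall>X\<in>nts ?G. dims_ok h w X (rules ?G X)"
      using rhs by blast
  qed (use rhs in blast)+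
qed

lemma split_slp_expands:
  assumes "s \<in> S"
  shows "expands (split_slp S t) (to_nat s) [s]"
  using assms
proof (induction "length s" arbitrary: s rule: less_induct)
  case less
  have X: "to_nat s \<in> nts (split_slp S t)" using less.prems by (simp add: split_slp_def)
  show ?case
  proof (rule split_rhsE[OF closed no_Nil less.prems])
    fix c assume "s = [c]" and "split_rhs S s = Chr c"
    then show ?thesis using expands.chr[OF X] by (simp add: split_slp_def)
  next
    fix a b assume ab: "a \<in> S" "b \<in> S" "a \<noteq> []" "b \<noteq> []" "s = a @ b"
      and "split_rhs S s = HCat (to_nat a) (to_nat b)"
    then have "rules (split_slp S t) (to_nat s) = HCat (to_nat a) (to_nat b)"
      by (simp add: split_slp_def)
    from expands.hcat[OF X this less.hyps less.hyps] show ?thesis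
      using ab by simp
  qed
qed

lemma slp_size_split_slp:
  assumes "finite S"
  shows "slp_size (split_slp S t) \<le> 2 * card S"
proof -
  have "slp_size (split_slp S t) = (\<Sum>X\<in>to_nat ` S. rhs_size (split_rhs S (from_nat X)))"
    by (simp add: slp_size_def split_slp_def)
  also have "\<dots> \<le> (\<Sum>X\<in>to_nat ` S. 2)"
  proof (rule sum_mono)
    fix X assume "X \<in> to_nat ` S"
    then obtain s where "s \<in> S" "X = to_nat s" by blast
    then show "rhs_size (split_rhs S (from_nat X)) \<le> 2"
      by (cases rule: split_rhsE[OF closed no_Nil]) auto
  qed
  also have "\<dots> \<le> 2 * card S" using card_image_le[OF assms, of to_nat] by simp
  finally show ?thesis .
qed

end

lemma split_closed_imp_slp1:
  fixes S :: "'a::countable list set"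
  assumes "finite S" and "split_closed S" and "[] \<notin> S" and "t \<in> S"
  shows "\<exists>G :: (nat, 'a) slp2. is_slp1 G \<and> derives G [t] \<and> slp_size G \<le> 2 * card S"
proof (intro exI conjI)
  show "is_slp1 (split_slp S t)" using is_slp1_split_slp[OF assms(2,3,1,4)] .
  show "derives (split_slp S t) [t]"
    using split_slp_expands[OF assms(2,3,4)] by (simp add: derives_def split_slp_def)
  show "slp_size (split_slp S t) \<le> 2 * card S" using slp_size_split_slp[OF assms(2,3,1)] .
qed

text \<open>Only the first N rows are kept: nonterminals unreachable from the start symbol may be
  taller than the derived string.\<close>
definition top_rows :: "('n, 'a, 'z) slp2_scheme \<Rightarrow> nat \<Rightarrow> 'a list set" where
  "top_rows G N = {expansion G X ! i | X i. X \<in> nts G \<and> i < length (expansion G X) \<and> i < N}"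

lemma top_rows_subset_image:
  "top_rows G N \<subseteq> (\<lambda>(X, i). expansion G X ! i) ` (nts G \<times> {..<N})"
  unfolding top_rows_def by auto

lemma finite_top_rows: "finite (nts G) \<Longrightarrow> finite (top_rows G N)"
  by (rule finite_subset[OF top_rows_subset_image]) simp

lemma card_top_rows_le:
  assumes "finite (nts G)"
  shows "card (top_rows G N) \<le> card (nts G) * N"
proof -
  have fin: "finite (nts G \<times> {..<N})" using assms by simp
  have "card (top_rows G N) \<le> card ((\<lambda>(X, i). expansion G X ! i) ` (nts G \<times> {..<N}))"
    using top_rows_subset_image fin by (intro card_mono) auto
  also have "\<dots> \<le> card (nts G \<times> {..<N})" using fin by (rule card_image_le)
  finally show ?thesis by (simp add: card_cartesian_product)
qed

lemma Nil_notin_top_rows: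
  assumes "is_slp2 G"
  shows "[] \<notin> top_rows G N"
proof
  assume "[] \<in> top_rows G N"
  then obtain X i where "X \<in> nts G" "i < length (expansion G X)" "expansion G X ! i = []"
    unfolding top_rows_def by auto
  then show False using expands_nonempty[OF expands_expansion[OF assms]] nth_mem by metis
qed

lemma rows_subset_top_rows:
  assumes "is_slp2 G" and "derives G T"
  shows "set T \<subseteq> top_rows G (length T)"
proof -
  have "expansion G (start G) = T" using assms(2) unfolding derives_def by (rule expansion_eqI)
  moreover have "start G \<in> nts G" using assms(1) unfolding is_slp2_def by blast
  ultimately show ?thesis unfolding top_rows_def by (force simp: in_set_conv_nth)
qed

lemma split_closed_top_rows:
  assumes G: "is_slp2 G"
  shows "split_closed (top_rows G N)"
proof -
  let ?E = "expansion G" and ?R = "top_rows G N"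
  have "\<exists>a\<in>?R. \<exists>b\<in>?R. ?E X ! i = a @ b"
    if "X \<in> nts G" "i < length (?E X)" "i < N" "2 \<le> length (?E X ! i)" for X i
    using wf_occurrence_rel_converse[OF G] that
  proof (induction X arbitrary: i rule: wf_induct_rule)
    case (less X)
    have EX: "expands G X (?E X)" by (rule expands_expansion[OF G less.prems(1)])
    have children: "Y \<in> nts G" "(Y, X) \<in> (occurrence_rel G)\<inverse>" if "Y \<in> rhs_nts (rules G X)" for Y
      using that G less.prems(1) unfolding is_slp2_def occurrence_rel_def by auto
    show ?case
    proof (cases "rules G X")
      case (Chr c)
      then have "?E X = [[c]]" using expansion_eqI[OF expands.chr[OF less.prems(1)]] by simp
      then show ?thesis using less.prems(2,4) by simp
    next
      case (HCat Y Z)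
      from EX show ?thesis
      proof cases
        case (hcat Y' Z' A B)
        with HCat have A: "?E Y = A" and B: "?E Z = B" and YZ: "Y \<in> nts G" "Z \<in> nts G"
          using expansion_eqI children by auto
        then have "?E X ! i = ?E Y ! i @ ?E Z ! i" and "i < length (?E Y)" "i < length (?E Z)"
          using hcat less.prems(2) by auto
        then show ?thesis using YZ less.prems(3) unfolding top_rows_def by blast
      qed (simp_all add: HCat)
    next
      case (VCat Y Z)
      from EX show ?thesis
      proof cases
        case (vcat Y' Z' A B)
        with VCat have A: "?E Y = A" and B: "?E Z = B"
          using expansion_eqI by auto
        have Y: "Y \<in> nts G" "(Y, X) \<in> (occurrence_rel G)\<inverse>"
          and Z: "Z \<in> nts G" "(Z, X) \<in> (occurrence_rel G)\<inverse>" using children VCat by auto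
        show ?thesis
        proof (cases "i < length A")
          case True
          then show ?thesis using less.IH[OF Y(2) Y(1)] less.prems vcat A by (simp add: nth_append)
        next
          case False
          then show ?thesis
            using less.IH[OF Z(2) Z(1), of "i - length A"] less.prems vcat B by (simp add: nth_append)
        qed
      qed (simp_all add: VCat)
    qed
  qed
  then show ?thesis unfolding split_closed_def top_rows_def by blast
qed

definition concat_prefixes :: "'a list list \<Rightarrow> 'a list set" where
  "concat_prefixes T = (\<lambda>k. concat (take k T)) ` {1..length T}"

lemma split_closed_Un_concat_prefixes:
  assumes "split_closed S" and "set T \<subseteq> S"
  shows "split_closed (S \<union> concat_prefixes T)"
  unfolding split_closed_def
proof (intro ballI impI)
  fix s assume s: "s \<in> S \<union> concat_prefixes T" and len: "2 \<le> length s"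
  let ?U = "S \<union> concat_prefixes T"
  show "\<exists>a\<in>?U. \<exists>b\<in>?U. s = a @ b"
  proof (cases "s \<in> S")
    case True
    then show ?thesis using assms(1) len unfolding split_closed_def by blast
  next
    case False
    then obtain k where k: "1 \<le> k" "k \<le> length T" and s_eq: "s = concat (take k T)"
      using s unfolding concat_prefixes_def by auto
    show ?thesis
    proof (cases "k = 1")
      case True
      then have "s \<in> S" using s_eq k assms(2) by (cases T) auto
      with False show ?thesis by contradiction
    next
      case False
      then obtain j where j: "k = Suc j" "1 \<le> j" using k by (cases k) auto
      then have "s = concat (take j T) @ T ! j"
        using s_eq k by (simp add: take_Suc_conv_app_nth)
      moreover have "concat (take j T) \<in> concat_prefixes T"
        using j k unfolding concat_prefixes_def by auto
      moreover have "T ! j \<in> S" using j k assms(2) by auto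
      ultimately show ?thesis by blast
    qed
  qed
qed

lemma Nil_notin_concat_prefixes:
  assumes "[] \<notin> set T"
  shows "[] \<notin> concat_prefixes T"
proof
  assume "[] \<in> concat_prefixes T"
  then obtain k where "1 \<le> k" "k \<le> length T" "concat (take k T) = []"
    unfolding concat_prefixes_def by auto
  then show False using assms by (cases T; cases k) auto
qed

lemma concat_in_concat_prefixes:
  assumes "T \<noteq> []"
  shows "concat T \<in> concat_prefixes T"
  using assms unfolding concat_prefixes_def by (force simp: Suc_le_eq)

lemma card_concat_prefixes: "card (concat_prefixes T) \<le> length T"
  unfolding concat_prefixes_def using card_image_le[of "{1..length T}"] by fastforce

lemma slp1_of_rows:
  fixes G :: "('n, 'a::countable, 'z) slp2_scheme"
  assumes G: "is_slp2 G" and T: "derives G T"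
  shows "\<exists>G' :: (nat, 'a) slp2. is_slp1 G' \<and> derives G' [concat T]
           \<and> slp_size G' \<le> 2 * ((card (nts G) + 1) * length T)"
proof -
  let ?R = "top_rows G (length T)"
  let ?U = "?R \<union> concat_prefixes T"
  have T_ne: "T \<noteq> []" "[] \<notin> set T"
    using expands_nonempty[of G "start G" T] T unfolding derives_def by simp_all
  have "finite (nts G)" using G unfolding is_slp2_def by simp
  then have fin: "finite ?R" "card ?R \<le> card (nts G) * length T"
    by (rule finite_top_rows, rule card_top_rows_le)
  have "split_closed ?U"
    using split_closed_Un_concat_prefixes[OF split_closed_top_rows[OF G]
        rows_subset_top_rows[OF G T]] .
  moreover have "[] \<notin> ?U"
    using Nil_notin_top_rows[OF G] Nil_notin_concat_prefixes[OF T_ne(2)] by blast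
  moreover have "concat T \<in> ?U"
    using concat_in_concat_prefixes[OF T_ne(1)] by blast
  moreover have "finite ?U"
    using fin(1) unfolding concat_prefixes_def by blast
  ultimately obtain G' :: "(nat, 'a) slp2" where
    G': "is_slp1 G'" "derives G' [concat T]" "slp_size G' \<le> 2 * card ?U"
    using split_closed_imp_slp1[of ?U "concat T"] by blast
  have "card ?U \<le> card (nts G) * length T + length T"
    using card_Un_le[of ?R "concat_prefixes T"] fin(2) card_concat_prefixes[of T] by linarith
  then have "slp_size G' \<le> 2 * ((card (nts G) + 1) * length T)"
    using G'(3) by (simp add: algebra_simps)
  with G'(1,2) show ?thesis by blast
qed

lemma card_nts_le_slp_size: "card (nts G) \<le> slp_size G"
proof -
  have "card (nts G) = (\<Sum>X\<in>nts G. 1)" by simp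
  also have "\<dots> \<le> slp_size G"
    unfolding slp_size_def
  proof (rule sum_mono)
    show "1 \<le> rhs_size (rules G X)" for X by (cases "rules G X") auto
  qed
  finally show ?thesis .
qed

theorem mainTheorem3:
  "\<exists>c::real. c > 0 \<and>
     (\<forall>(G :: (nat, 'a::finite) slp2) (T :: 'a list list) N M.
        is_slp2 G \<and> derives G T \<and> length T = N \<and> (\<forall>r\<in>set T. length r = M) \<and> N \<le> M
        \<longrightarrow> (\<exists>G' :: (nat, 'a) slp2. is_slp1 G' \<and> derives G' [concat T]
               \<and> real (slp_size G') \<le> c * real (slp_size G) * real N))"
proof (intro exI[of _ 4] conjI allI impI)
  fix G :: "(nat, 'a::finite) slp2" and T :: "'a list list" and N M :: nat
  assume "is_slp2 G \<and> derives G T \<and> length T = N \<and> (\<forall>r\<in>set T. length r = M) \<and> N \<le> M"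
  then have G: "is_slp2 G" and T: "derives G T" and N: "length T = N" by auto
  obtain G' :: "(nat, 'a) slp2" where G': "is_slp1 G'" "derives G' [concat T]"
    and size: "slp_size G' \<le> 2 * ((card (nts G) + 1) * N)"
    using slp1_of_rows[OF G T] N by blast
  have "nts G \<noteq> {}" "finite (nts G)" using G unfolding is_slp2_def by auto
  then have "1 \<le> card (nts G)" by (simp add: Suc_le_eq card_gt_0_iff)
  then have "(card (nts G) + 1) * N \<le> (2 * slp_size G) * N"
    using card_nts_le_slp_size[of G] by (intro mult_right_mono) linarith+
  then have "slp_size G' \<le> 2 * (2 * slp_size G * N)"
    using size by linarith
  from of_nat_mono[OF this, where 'a = real]
  have "real (slp_size G') \<le> 4 * real (slp_size G) * real N" by (simp add: mult.assoc)
  with G' show "\<exists>G' :: (nat, 'a) slp2. is_slp1 G' \<and> derives G' [concat T]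
      \<and> real (slp_size G') \<le> 4 * real (slp_size G) * real N" by blast
qed simp

end
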